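(* Let $\theta>0$, and for $n\in\mathbb{N}$ let $J_n\subset\{1,\dots,n\}$ be arbitrary. Define for $l\ge1$ \[ \upsilon_n(l):=\theta^l\sum_{\substack{j_1,\dots,j_l\in J_n\\ j_1+\cdots+j_l<n}}\frac{1}{j_1\cdots j_l}\Big(1-\frac{j_1+\cdots+j_l}{n}\Big)^{\theta-1}. \] If $\theta\ge1$, then $\upsilon_n(l)\le\upsilon_n(1)^l$ for all $n,l\in\mathbb{N}$. If $\theta<1$, then there is a constant $C>0$ depending only on $\theta$ such that $\upsilon_n(l)\le C^l(\upsilon_n(1)+1)^l$ for all $n,l\in\mathbb{N}$. *)

theory Defs
  imports "HOL-Analysis.Analysis"
begin

definition upsilon :: "real \<Rightarrow> nat set \<Rightarrow> nat \<Rightarrow> nat \<Rightarrow> real" where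
  "upsilon \<theta> J n l =
     \<theta> ^ l * (\<Sum>js \<in> {js. length js = l \<and> set js \<subseteq> J \<and> sum_list js < n}.
        (1 / real (prod_list js)) * (1 - real (sum_list js) / real n) powr (\<theta> - 1))"

end

theory Submission
  imports Defs
begin

text \<open>Write \<open>\<upsilon>(n, l) = \<theta>^l * W(l, n) / n powr (\<theta> - 1)\<close>, where \<open>W(l, M)\<close> sums
  \<open>(M - (j\<^sub>1 + \<dots> + j\<^sub>l)) powr (\<theta> - 1) / (j\<^sub>1 * \<dots> * j\<^sub>l)\<close> over the tuples in \<open>J\<close> with sum \<open>< M\<close>.
  Removing the first letter gives \<open>W(l + 1, M) = \<Sum>j\<in>J, j<M. W(l, M - j) / j\<close>, so a bound
  \<open>W(1, M) \<le> K * M powr (\<theta> - 1)\<close> for all \<open>M \<le> n\<close> iterates to \<open>\<upsilon>(n, l) \<le> (\<theta> * K)^l\<close>.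
  For \<open>\<theta> \<ge> 1\<close> one can take \<open>K = W(1, n) / n powr (\<theta> - 1)\<close>, because \<open>(M - j) / M \<le> (n - j) / n\<close>;
  then \<open>\<theta> * K = \<upsilon>(n, 1)\<close>. For \<open>\<theta> < 1\<close>, splitting \<open>W(1, M)\<close> at \<open>j = M / 2\<close> and comparing
  \<open>\<Sum>i\<le>M. i powr (\<theta> - 1)\<close> with \<open>M powr \<theta> / \<theta>\<close> gives \<open>K = 2 * (\<Sum>j\<in>J, j<n. 1 / j) + 2 / \<theta>\<close>;
  as \<open>(1 - j / n) powr (\<theta> - 1) \<ge> 1\<close>, \<open>\<theta> * K \<le> 2 * (\<upsilon>(n, 1) + 1)\<close>, so \<open>C = 2\<close> works.\<close>

definition bounded_tuples :: "nat set \<Rightarrow> nat \<Rightarrow> nat \<Rightarrow> nat list set" where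
  "bounded_tuples J l M = {js. length js = l \<and> set js \<subseteq> J \<and> sum_list js < M}"

definition tuple_weight_sum :: "real \<Rightarrow> nat set \<Rightarrow> nat \<Rightarrow> nat \<Rightarrow> real" where
  "tuple_weight_sum e J l M =
     (\<Sum>js\<in>bounded_tuples J l M. (real M - real (sum_list js)) powr e / real (prod_list js))"

lemma finite_bounded_tuples: "finite (bounded_tuples J l M)"
proof (rule finite_subset[OF _ finite_lists_length_eq[of "{..<M}" l]])
  show "bounded_tuples J l M \<subseteq> {xs. set xs \<subseteq> {..<M} \<and> length xs = l}"
    unfolding bounded_tuples_def using member_le_sum_list by fastforce
qed simp

lemma bounded_tuples_Suc:
  "bounded_tuples J (Suc l) M =
     (\<lambda>(j, js). j # js) ` (SIGMA j:{j\<in>J. j < M}. bounded_tuples J l (M - j))"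
proof (rule set_eqI, rule iffI)
  fix xs assume "xs \<in> bounded_tuples J (Suc l) M"
  then obtain j js where "xs = j # js" "length js = l" "j \<in> J" "set js \<subseteq> J" "j + sum_list js < M"
    unfolding bounded_tuples_def by (cases xs) auto
  then show "xs \<in> (\<lambda>(j, js). j # js) ` (SIGMA j:{j\<in>J. j < M}. bounded_tuples J l (M - j))"
    unfolding bounded_tuples_def by (auto intro!: image_eqI[where x="(j, js)"])
qed (auto simp: bounded_tuples_def)

lemma tuple_weight_sum_0: "tuple_weight_sum e J 0 M = real M powr e"
proof -
  have "bounded_tuples J 0 M = (if 0 < M then {[]} else {})"
    by (auto simp: bounded_tuples_def)
  then show ?thesis by (simp add: tuple_weight_sum_def)
qed

lemma tuple_weight_sum_Suc:
  "tuple_weight_sum e J (Suc l) M = (\<Sum>j\<in>{j\<in>J. j < M}. tuple_weight_sum e J l (M - j) / real j)"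
proof -
  let ?f = "\<lambda>js. (real M - real (sum_list js)) powr e / real (prod_list js)"
  have inj: "inj_on (\<lambda>(j, js). j # js) (SIGMA j:{j\<in>J. j < M}. bounded_tuples J l (M - j))"
    by (auto simp: inj_on_def)
  have "tuple_weight_sum e J (Suc l) M = (\<Sum>j\<in>{j\<in>J. j < M}. \<Sum>js\<in>bounded_tuples J l (M - j). ?f (j # js))"
    unfolding tuple_weight_sum_def bounded_tuples_Suc sum.reindex[OF inj]
    by (subst sum.Sigma) (auto simp: finite_bounded_tuples split_def)
  also have "\<dots> = (\<Sum>j\<in>{j\<in>J. j < M}. tuple_weight_sum e J l (M - j) / real j)"
    unfolding tuple_weight_sum_def sum_divide_distrib
    by (intro sum.cong refl) (auto simp: of_nat_diff algebra_simps)
  finally show ?thesis .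
qed

lemma tuple_weight_sum_1:
  "tuple_weight_sum e J 1 M = (\<Sum>j\<in>{j\<in>J. j < M}. real (M - j) powr e / real j)"
  using tuple_weight_sum_Suc[of e J 0 M] by (simp add: tuple_weight_sum_0)

lemma tuple_weight_sum_nonneg: "tuple_weight_sum e J l M \<ge> 0"
  unfolding tuple_weight_sum_def by (intro sum_nonneg divide_nonneg_nonneg) auto

text \<open>The one-letter bound is needed at every cut-off \<open>M - j\<close> reached by peeling off
  letters, hence uniformly for \<open>M \<le> N\<close>.\<close>
lemma tuple_weight_sum_le_power:
  assumes K: "K \<ge> 0"
    and one: "\<And>M. M \<le> N \<Longrightarrow> tuple_weight_sum e J 1 M \<le> K * real M powr e"
    and "M \<le> N"
  shows "tuple_weight_sum e J l M \<le> K ^ l * real M powr e"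
  using \<open>M \<le> N\<close>
proof (induction l arbitrary: M)
  case 0
  then show ?case by (simp add: tuple_weight_sum_0)
next
  case (Suc l)
  have "tuple_weight_sum e J (Suc l) M = (\<Sum>j\<in>{j\<in>J. j < M}. tuple_weight_sum e J l (M - j) / real j)"
    by (rule tuple_weight_sum_Suc)
  also have "\<dots> \<le> (\<Sum>j\<in>{j\<in>J. j < M}. K ^ l * real (M - j) powr e / real j)"
    using Suc.prems by (intro sum_mono divide_right_mono Suc.IH) auto
  also have "\<dots> = K ^ l * tuple_weight_sum e J 1 M"
    unfolding tuple_weight_sum_1 sum_distrib_left by (simp add: mult.assoc)
  also have "\<dots> \<le> K ^ l * (K * real M powr e)"
    using K Suc.prems by (intro mult_left_mono one) auto
  finally show ?case by (simp add: ac_simps)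
qed

lemma tuple_weight_sum_1_le_scaled:
  assumes e: "e \<ge> 0" and "M \<le> N"
  shows "tuple_weight_sum e J 1 M \<le> tuple_weight_sum e J 1 N / real N powr e * real M powr e"
proof (cases "M = 0")
  case True
  then show ?thesis unfolding tuple_weight_sum_1 by simp
next
  case False
  with \<open>M \<le> N\<close> have "M > 0" "N > 0" by auto
  have ratio: "(real (M - j) / real M) powr e \<le> (real (N - j) / real N) powr e" if "j < M" for j
  proof (rule powr_mono2[OF e])
    have "real j / real N \<le> real j / real M"
      using \<open>M > 0\<close> \<open>M \<le> N\<close> by (intro divide_left_mono) auto
    then show "real (M - j) / real M \<le> real (N - j) / real N"
      using that \<open>M > 0\<close> \<open>M \<le> N\<close> by (simp add: of_nat_diff diff_divide_distrib)
  qed simp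
  have "tuple_weight_sum e J 1 M =
      (\<Sum>j\<in>{j\<in>J. j < M}. (real (M - j) / real M) powr e / real j) * real M powr e"
    unfolding tuple_weight_sum_1 sum_distrib_right using \<open>M > 0\<close>
    by (intro sum.cong refl) (simp add: powr_divide)
  also have "\<dots> \<le> (\<Sum>j\<in>{j\<in>J. j < N}. (real (N - j) / real N) powr e / real j) * real M powr e"
  proof (intro mult_right_mono order.trans[OF sum_mono sum_mono2])
    show "(real (M - j) / real M) powr e / real j \<le> (real (N - j) / real N) powr e / real j"
      if "j \<in> {j\<in>J. j < M}" for j
      using that by (intro divide_right_mono ratio) auto
  qed (use \<open>M \<le> N\<close> in auto)
  also have "\<dots> = tuple_weight_sum e J 1 N / real N powr e * real M powr e"
    unfolding tuple_weight_sum_1 sum_divide_distrib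
    by (intro arg_cong2[where f="(*)"] sum.cong refl) (simp add: powr_divide)
  finally show ?thesis .
qed

lemma powr_diff_powr_ge:
  fixes \<theta> x :: real
  assumes "0 < \<theta>" "\<theta> \<le> 1" "x \<ge> 1"
  shows "\<theta> * x powr (\<theta> - 1) \<le> x powr \<theta> - (x - 1) powr \<theta>"
proof (cases "x = 1")
  case True
  then show ?thesis using assms by simp
next
  case False
  then have "x - 1 < x" "x - 1 > 0" using assms by auto
  then have "\<exists>z. x - 1 < z \<and> z < x \<and>
      x powr \<theta> - (x - 1) powr \<theta> = (x - (x - 1)) * (\<theta> * z powr (\<theta> - 1))"
    by (intro MVT2) (auto intro!: has_real_derivative_powr)
  then obtain z where z: "x - 1 < z" "z < x" "x powr \<theta> - (x - 1) powr \<theta> = \<theta> * z powr (\<theta> - 1)"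
    by auto
  have "x powr (\<theta> - 1) \<le> z powr (\<theta> - 1)"
    using assms z \<open>x - 1 > 0\<close> by (intro powr_mono2') auto
  then show ?thesis using z assms by simp
qed

lemma sum_Suc_powr_le:
  fixes \<theta> :: real
  assumes "0 < \<theta>" "\<theta> \<le> 1"
  shows "(\<Sum>i<N. real (Suc i) powr (\<theta> - 1)) \<le> real N powr \<theta> / \<theta>"
proof (induction N)
  case 0
  then show ?case using assms by simp
next
  case (Suc N)
  have "\<theta> * real (Suc N) powr (\<theta> - 1) \<le> real (Suc N) powr \<theta> - real N powr \<theta>"
    using powr_diff_powr_ge[OF assms, of "real (Suc N)"] by simp
  then have "real (Suc N) powr (\<theta> - 1) \<le> (real (Suc N) powr \<theta> - real N powr \<theta>) / \<theta>"
    using assms by (simp add: field_simps)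
  with Suc show ?case by (simp add: diff_divide_distrib)
qed

text \<open>Either \<open>j < M / 2\<close>, so that \<open>M - j \<ge> M / 2\<close>, or \<open>1 / j \<le> 2 / M\<close>.\<close>
lemma powr_div_le_split:
  assumes e: "-1 \<le> e" "e \<le> 0" and "j < M"
  shows "real (M - j) powr e / real j \<le> 2 * real M powr e / real j + 2 * real (M - j) powr e / real M"
proof (cases "2 * j < M")
  case True
  have "1 / 2 \<le> (2::real) powr e"
    using powr_mono[of "-1" e 2] e by (simp add: powr_minus)
  then have "real M powr e \<le> 2 powr e * (2 * real M powr e)"
    using mult_left_mono[of "1 / 2" "2 powr e" "2 * real M powr e"] by (simp add: mult_ac)
  then have "(real M / 2) powr e \<le> 2 * real M powr e"
    by (simp add: powr_divide divide_le_eq mult.commute)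
  moreover have "real (M - j) powr e \<le> (real M / 2) powr e"
    using True e by (intro powr_mono2') (auto simp: of_nat_diff)
  ultimately have "real (M - j) powr e / real j \<le> 2 * real M powr e / real j"
    by (intro divide_right_mono) auto
  then show ?thesis by (simp add: add_increasing2)
next
  case False
  then have "1 / real j \<le> 2 / real M"
    using \<open>j < M\<close> by (simp add: field_simps)
  then have "real (M - j) powr e / real j \<le> 2 * real (M - j) powr e / real M"
    using mult_left_mono[of "1 / real j" "2 / real M" "real (M - j) powr e"] by (simp add: mult_ac)
  then show ?thesis by (simp add: add_increasing)
qed

lemma tuple_weight_sum_1_le_harmonic:
  fixes J :: "nat set" and M :: nat
  assumes \<theta>: "0 < \<theta>" "\<theta> \<le> 1"
  defines "H \<equiv> (\<Sum>j\<in>{j\<in>J. j < M}. 1 / real j)"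
  shows "tuple_weight_sum (\<theta> - 1) J 1 M \<le> (2 * H + 2 / \<theta>) * real M powr (\<theta> - 1)"
proof (cases "M = 0")
  case True
  then show ?thesis unfolding tuple_weight_sum_1 by simp
next
  case False
  let ?e = "\<theta> - 1"
  have "tuple_weight_sum ?e J 1 M
      \<le> (\<Sum>j\<in>{j\<in>J. j < M}. 2 * real M powr ?e / real j + 2 * real (M - j) powr ?e / real M)"
    unfolding tuple_weight_sum_1 using \<theta> by (intro sum_mono powr_div_le_split) auto
  also have "\<dots> = 2 * real M powr ?e * H + 2 / real M * (\<Sum>j\<in>{j\<in>J. j < M}. real (M - j) powr ?e)"
    unfolding H_def by (simp add: sum.distrib sum_distrib_left)
  also have "(\<Sum>j\<in>{j\<in>J. j < M}. real (M - j) powr ?e) \<le> (\<Sum>j<M. real (M - j) powr ?e)"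
    by (intro sum_mono2) auto
  also have "(\<Sum>j<M. real (M - j) powr ?e) = (\<Sum>i<M. real (Suc i) powr ?e)"
    by (subst sum.nat_diff_reindex[symmetric]) (intro sum.cong refl, simp add: Suc_diff_Suc)
  also have "\<dots> \<le> real M powr \<theta> / \<theta>"
    using \<theta> by (rule sum_Suc_powr_le)
  also have "real M powr \<theta> = real M * real M powr ?e"
    using False by (simp add: powr_diff)
  finally show ?thesis
    using False \<theta> by (simp add: field_simps)
qed

lemma upsilon_eq_tuple_weight_sum:
  assumes "n > 0"
  shows "upsilon \<theta> J n l = \<theta> ^ l * (tuple_weight_sum (\<theta> - 1) J l n / real n powr (\<theta> - 1))"
proof -
  have "(1 - real s / real n) powr (\<theta> - 1) = (real n - real s) powr (\<theta> - 1) / real n powr (\<theta> - 1)" for s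
  proof -
    have "1 - real s / real n = (real n - real s) / real n"
      using assms by (simp add: field_simps)
    then show ?thesis by (simp add: powr_divide)
  qed
  then show ?thesis
    unfolding upsilon_def tuple_weight_sum_def bounded_tuples_def sum_divide_distrib
    by (intro arg_cong2[where f="(*)"] sum.cong) auto
qed

lemma sum_inverse_le_tuple_weight_sum_1:
  assumes "e \<le> 0" "N > 0"
  shows "(\<Sum>j\<in>{j\<in>J. j < N}. 1 / real j) \<le> tuple_weight_sum e J 1 N / real N powr e"
proof -
  have "1 / real j \<le> (real (N - j) / real N) powr e / real j" if "j < N" for j
  proof -
    have "1 \<le> (real (N - j) / real N) powr e"
      using powr_mono2'[of e "real (N - j) / real N" 1] assms that by auto
    then show ?thesis by (simp add: divide_right_mono)
  qed
  then show ?thesis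
    unfolding tuple_weight_sum_1 sum_divide_distrib using \<open>N > 0\<close>
    by (intro sum_mono) (auto simp: powr_divide mult.commute)
qed

lemma upsilon_le_power_upsilon_1:
  assumes "\<theta> \<ge> 1" "n > 0"
  shows "upsilon \<theta> J n l \<le> upsilon \<theta> J n 1 ^ l"
proof -
  define K where "K = tuple_weight_sum (\<theta> - 1) J 1 n / real n powr (\<theta> - 1)"
  have "K \<ge> 0" unfolding K_def by (simp add: tuple_weight_sum_nonneg)
  have "tuple_weight_sum (\<theta> - 1) J l n \<le> K ^ l * real n powr (\<theta> - 1)"
    using \<open>K \<ge> 0\<close> assms unfolding K_def
    by (intro tuple_weight_sum_le_power tuple_weight_sum_1_le_scaled) auto
  then have "upsilon \<theta> J n l \<le> \<theta> ^ l * K ^ l"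
    using assms by (simp add: upsilon_eq_tuple_weight_sum divide_le_eq mult_left_mono)
  also have "\<dots> = upsilon \<theta> J n 1 ^ l"
    unfolding upsilon_eq_tuple_weight_sum[OF \<open>n > 0\<close>, of \<theta> J 1] K_def
    by (simp only: power_one_right power_mult_distrib)
  finally show ?thesis .
qed

lemma upsilon_le_power_upsilon_1_plus_1:
  assumes "0 < \<theta>" "\<theta> \<le> 1" "n > 0"
  shows "upsilon \<theta> J n l \<le> 2 ^ l * (upsilon \<theta> J n 1 + 1) ^ l"
proof -
  define B where "B = (\<Sum>j\<in>{j\<in>J. j < n}. 1 / real j)"
  define K where "K = 2 * B + 2 / \<theta>"
  have "B \<ge> 0" unfolding B_def by (intro sum_nonneg) auto
  then have "K \<ge> 0" using assms unfolding K_def by simp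
  have one: "tuple_weight_sum (\<theta> - 1) J 1 M \<le> K * real M powr (\<theta> - 1)" if "M \<le> n" for M
  proof (rule order.trans[OF tuple_weight_sum_1_le_harmonic[OF assms(1,2)]])
    have "(\<Sum>j\<in>{j\<in>J. j < M}. 1 / real j) \<le> B"
      unfolding B_def using that by (intro sum_mono2) auto
    then show "(2 * (\<Sum>j\<in>{j\<in>J. j < M}. 1 / real j) + 2 / \<theta>) * real M powr (\<theta> - 1)
        \<le> K * real M powr (\<theta> - 1)"
      unfolding K_def by (intro mult_right_mono) auto
  qed
  have "tuple_weight_sum (\<theta> - 1) J l n \<le> K ^ l * real n powr (\<theta> - 1)"
    using tuple_weight_sum_le_power[OF \<open>K \<ge> 0\<close> one order.refl] .
  then have "upsilon \<theta> J n l \<le> \<theta> ^ l * K ^ l"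
    using assms by (simp add: upsilon_eq_tuple_weight_sum divide_le_eq mult_left_mono)
  also have "\<dots> = (2 * (\<theta> * B + 1)) ^ l"
    using assms by (simp add: K_def power_mult_distrib[symmetric] algebra_simps)
  also have "\<dots> \<le> (2 * (upsilon \<theta> J n 1 + 1)) ^ l"
  proof (intro power_mono)
    have "\<theta> * B \<le> upsilon \<theta> J n 1"
      unfolding upsilon_eq_tuple_weight_sum[OF \<open>n > 0\<close>, of \<theta> J 1] B_def power_one_right
      using assms by (intro mult_left_mono sum_inverse_le_tuple_weight_sum_1) auto
    then show "2 * (\<theta> * B + 1) \<le> 2 * (upsilon \<theta> J n 1 + 1)" by simp
  qed (use assms \<open>B \<ge> 0\<close> in simp)
  finally show ?thesis by (simp only: power_mult_distrib)
qed

theorem lemma4: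
  fixes \<theta> :: real
  assumes "\<theta> > 0"
  shows "(\<theta> \<ge> 1 \<longrightarrow>
            (\<forall>J :: nat \<Rightarrow> nat set. (\<forall>n. J n \<subseteq> {1..n}) \<longrightarrow>
               (\<forall>n l. n \<ge> 1 \<longrightarrow> l \<ge> 1 \<longrightarrow>
                  upsilon \<theta> (J n) n l \<le> (upsilon \<theta> (J n) n 1) ^ l)))
       \<and> (\<theta> < 1 \<longrightarrow>
            (\<exists>C > 0. \<forall>J :: nat \<Rightarrow> nat set. (\<forall>n. J n \<subseteq> {1..n}) \<longrightarrow>
               (\<forall>n l. n \<ge> 1 \<longrightarrow> l \<ge> 1 \<longrightarrow>
                  upsilon \<theta> (J n) n l \<le> C ^ l * (upsilon \<theta> (J n) n 1 + 1) ^ l)))"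
  using assms upsilon_le_power_upsilon_1 upsilon_le_power_upsilon_1_plus_1
  by (auto intro!: exI[of _ 2])

end
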